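(* Let $H$ be a cumulative distribution function on $[0,1]$, let $H^{-1}(y)=\inf\{x:H(x)>y\}$, and assume that $f(x)=\frac{d}{dx}H^{-1}(x)$ exists for almost every $x\in[0,1]$ and that there is $\epsilon_0>0$ with $f(x)\ge\epsilon_0$ almost everywhere. Let $X_1,X_2,\dots$ be i.i.d. with distribution function $H$, and for each $K\ge2$ let $D_1,\dots,D_K$ be the spacings of $X_1,\dots,X_{K-1}$. Then $$\frac1K\sum_{i=1}^K\log_K D_i\xrightarrow{\text{a.s.}}-1\quad\text{as }K\to\infty.$$
   Context: Spacings: given $X_1,\dots,X_{K-1}\in[0,1]$ with order statistics $X_{1:K-1}\ge X_{2:K-1}\ge\cdots\ge X_{K-1:K-1}$, the spacings are $D_1=1-X_{1:K-1}$, $D_i=X_{i-1:K-1}-X_{i:K-1}$ for $2\le i\le K-1$, and $D_K=X_{K-1:K-1}$; thus $\sum_{i=1}^KD_i=1$. $\log_K$ denotes logarithm to base $K$. *)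

theory Defs
  imports "HOL-Probability.Probability"
begin

definition gen_inv :: "(real \<Rightarrow> real) \<Rightarrow> real \<Rightarrow> real" where
  "gen_inv H y = Inf {x. H x > y}"

text \<open>Order statistics in decreasing order: order_stat xs i is the i-th largest
  element of xs (1-based), i.e. X_{i:n} with X_{1:n} \<ge> X_{2:n} \<ge> ... .\<close>
definition order_stat :: "real list \<Rightarrow> nat \<Rightarrow> real" where
  "order_stat xs i = rev (sort xs) ! (i - 1)"

definition spacing :: "real list \<Rightarrow> nat \<Rightarrow> real" where
  "spacing xs i = (let K = length xs + 1 in
     if i = 1 then 1 - order_stat xs 1
     else if i = K then order_stat xs (K - 1)
     else order_stat xs (i - 1) - order_stat xs i)"

end

theory Submission
  imports Defs "HOL-Real_Asymp.Real_Asymp"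
begin

text \<open>
  Because the inverse of H has derivative at least \<epsilon>0 almost everywhere, H is Lipschitz
  with constant 1/\<epsilon>0: each X_i falls into a given interval of length t with probability
  at most t/\<epsilon>0, and two of them come closer than t with probability at most 2t/\<epsilon>0.

  The upper bound is deterministic: applying ln x \<le> x - 1 to K D_i shows that positive
  spacings summing to 1 satisfy \<Sum> ln D_i \<le> -K ln K.

  For the lower bound, Borel-Cantelli gives almost surely, for all large K, that the first
  K - 1 points stay 1/K^4 apart from each other and from 0 and 1, and, along dyadic blocks
  2^m \<le> K < 2^(m+1), that fewer than \<delta> 2^m pairs among the first 2^(m+1) points are closer
  than 2^(-(1+\<delta>)(m+1)) \<ge> (2K)^(-(1+\<delta>)); the expected number of such pairs is
  O((2^(1-\<delta>))^(m+1)), so by Markov's inequality the failure probabilities decay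
  geometrically in m. So every spacing is at least 1/K^4,
  and all but at most \<delta> K + 2 of them are at least (2K)^(-(1+\<delta>)), whence
  \<Sum> ln D_i \<ge> -(1 + 5\<delta> + o(1)) K ln K.
\<close>

section \<open>A Lipschitz bound for the distribution function\<close>

lemma strict_increasing_if_locally_increasing:
  fixes \<phi> :: "real \<Rightarrow> real"
  assumes "a < b"
    and local: "\<And>x. x \<in> {a..b} \<Longrightarrow>
      \<forall>\<^sub>F z in at x within {a..b}. (z < x \<longrightarrow> \<phi> z < \<phi> x) \<and> (x < z \<longrightarrow> \<phi> x < \<phi> z)"
  shows "\<phi> a < \<phi> b"
proof -
  define T where "T = {x \<in> {a..b}. \<forall>z. a < z \<and> z \<le> x \<longrightarrow> \<phi> a < \<phi> z}"
  define s where "s = Sup T"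
  have aT: "a \<in> T" unfolding T_def using \<open>a < b\<close> by auto
  have bdd: "bdd_above T" unfolding T_def by (auto intro: bdd_aboveI[of _ b])
  have "s \<le> b" unfolding s_def using aT by (intro cSup_least) (auto simp: T_def)
  have below_s: "\<phi> a < \<phi> z" if z: "a < z" "z < s" for z
  proof -
    obtain x where "x \<in> T" "z < x" using z(2) less_cSup_iff[OF _ bdd] aT unfolding s_def by blast
    then show ?thesis using z unfolding T_def by auto
  qed
  have "a < s"
  proof -
    obtain d where "d > 0" and d: "\<forall>z\<in>{a..b}. z \<noteq> a \<and> dist z a < d \<longrightarrow> (a < z \<longrightarrow> \<phi> a < \<phi> z)"
      using local[of a] \<open>a < b\<close> unfolding eventually_at by force
    have "min b (a + d/2) \<in> T" unfolding T_def using \<open>d > 0\<close> \<open>a < b\<close> d by (auto simp: dist_real_def)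
    then have "min b (a + d/2) \<le> s" unfolding s_def by (rule cSup_upper[OF _ bdd])
    then show ?thesis using \<open>d > 0\<close> \<open>a < b\<close> by linarith
  qed
  obtain d where "d > 0" and d: "\<forall>z\<in>{a..b}. z \<noteq> s \<and> dist z s < d \<longrightarrow>
      (z < s \<longrightarrow> \<phi> z < \<phi> s) \<and> (s < z \<longrightarrow> \<phi> s < \<phi> z)"
    using local[of s] \<open>a < s\<close> \<open>s \<le> b\<close> unfolding eventually_at by auto
  have at_s: "\<phi> a < \<phi> s"
  proof -
    define u where "u = max a (s - d/2)"
    have "u \<in> {a..b}" "u \<noteq> s" "dist u s < d" "u < s"
      using \<open>d > 0\<close> \<open>a < s\<close> \<open>s \<le> b\<close> unfolding u_def by (auto simp: dist_real_def)
    then have "\<phi> u < \<phi> s" using d by blast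
    moreover have "\<phi> a \<le> \<phi> u"
      using below_s[of "s - d/2"] \<open>d > 0\<close> unfolding u_def by (cases "a < s - d/2") auto
    ultimately show ?thesis by linarith
  qed
  have "\<not> s < b"
  proof
    assume "s < b"
    have "\<phi> a < \<phi> z" if "a < z" "z \<le> min b (s + d/2)" for z
      using below_s[of z] at_s d \<open>d > 0\<close> \<open>a < s\<close> that
      by (cases z s rule: linorder_cases) (force simp: dist_real_def)+
    then have "min b (s + d/2) \<in> T" unfolding T_def using \<open>a < s\<close> \<open>s < b\<close> \<open>d > 0\<close> by auto
    then have "min b (s + d/2) \<le> s" unfolding s_def by (rule cSup_upper[OF _ bdd])
    then show False using \<open>s < b\<close> \<open>d > 0\<close> by linarith
  qed
  then show ?thesis using at_s \<open>s \<le> b\<close> by auto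
qed

lemma eventually_strict_increasing_if_deriv_gt:
  fixes G q :: "real \<Rightarrow> real"
  assumes "(G has_real_derivative f) (at x)" "c < f" "mono q"
  shows "\<forall>\<^sub>F z in at x. (z < x \<longrightarrow> G z - c * z + q z < G x - c * x + q x)
                     \<and> (x < z \<longrightarrow> G x - c * x + q x < G z - c * z + q z)"
proof -
  have "((\<lambda>z. (G z - G x) / (z - x)) \<longlongrightarrow> f) (at x)"
    using assms(1) by (simp add: has_field_derivative_iff)
  then have "\<forall>\<^sub>F z in at x. c < (G z - G x) / (z - x)"
    using assms(2) by (rule order_tendstoD)
  then show ?thesis
  proof (rule eventually_mono)
    fix z assume slope: "c < (G z - G x) / (z - x)"
    show "(z < x \<longrightarrow> G z - c * z + q z < G x - c * x + q x)
        \<and> (x < z \<longrightarrow> G x - c * x + q x < G z - c * z + q z)"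
    proof (intro conjI impI)
      assume "z < x"
      then have "G z - G x < c * (z - x)" using slope by (simp add: neg_less_divide_eq)
      moreover have "q z \<le> q x" using \<open>mono q\<close> \<open>z < x\<close> by (simp add: monoD)
      ultimately show "G z - c * z + q z < G x - c * x + q x" by (simp add: right_diff_distrib)
    next
      assume "x < z"
      then have "c * (z - x) < G z - G x" using slope by (simp add: pos_less_divide_eq)
      moreover have "q x \<le> q z" using \<open>mono q\<close> \<open>x < z\<close> by (simp add: monoD)
      ultimately show "G x - c * x + q x < G z - c * z + q z" by (simp add: right_diff_distrib)
    qed
  qed
qed

lemma null_set_subset_small_open:
  fixes r :: real
  assumes "N \<in> null_sets lborel" "r > 0"
  obtains U :: "real set" where "open U" "N \<subseteq> U" "emeasure lborel U < ennreal r"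
proof -
  obtain U where U: "open U" "N \<subseteq> U" "emeasure lborel (U - N) < r"
    using outer_regular_lborel[of N r] assms by (auto simp: null_sets_def)
  have "emeasure lborel U \<le> emeasure lborel (U - N) + emeasure lborel N"
    using assms(1) U by (intro order_trans[OF emeasure_mono emeasure_subadditive]) auto
  also have "emeasure lborel N = 0" using assms(1) by (rule null_setsD1)
  finally have "emeasure lborel U \<le> emeasure lborel (U - N)" by simp
  with U show thesis using that[of U] le_less_trans by blast
qed

lemma measure_Int_atLeastAtMost_split:
  fixes U :: "real set"
  assumes "U \<in> sets borel" "emeasure lborel U < \<infinity>" "y \<le> u" "u \<le> v"
  shows "measure lborel (U \<inter> {y..v}) = measure lborel (U \<inter> {y..u}) + measure lborel (U \<inter> {u<..v})"
proof -
  have fin: "emeasure lborel (U \<inter> A) \<noteq> \<infinity>" for A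
    using emeasure_mono[of "U \<inter> A" U lborel] assms(1,2) by (auto simp: top_unique)
  have "U \<inter> {y..v} = (U \<inter> {y..u}) \<union> (U \<inter> {u<..v})" using assms(3,4) by auto
  then show ?thesis
    by (simp only:) (rule measure_Union[OF fin fin], auto simp: assms(1))
qed

lemma slope_ge_if_deriv_ge_outside_small_open:
  fixes G :: "real \<Rightarrow> real"
  assumes mono: "mono_on {0<..<1} G" and "c < e" "0 \<le> e"
    and "open U" and U_small: "emeasure lborel U < ennreal r" and "0 < r"
    and deriv: "\<And>x. x \<in> {y..y'} \<Longrightarrow> x \<notin> U \<Longrightarrow> \<exists>f. (G has_real_derivative f) (at x) \<and> f \<ge> e"
    and y: "0 < y" "y < y'" "y' < 1"
  shows "c * (y' - y) - e * r \<le> G y' - G y"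
proof -
  have U: "U \<in> sets borel" "emeasure lborel U < \<infinity>"
    using \<open>open U\<close> U_small by (auto simp: borel_open order.strict_trans)
  define q where "q x = measure lborel (U \<inter> {y..x})" for x
  have "U \<inter> {y..x} \<in> fmeasurable lborel" for x
    using emeasure_mono[of "U \<inter> {y..x}" U lborel] U by (auto simp: fmeasurable_def intro: le_less_trans)
  then have "mono q"
    unfolding q_def by (intro monoI measure_mono_fmeasurable) (auto simp: fmeasurable_def)
  have "q y' \<le> r"
  proof -
    have "emeasure lborel (U \<inter> {y..y'}) < ennreal r"
      using emeasure_mono[of "U \<inter> {y..y'}" U lborel] U U_small by auto
    then show ?thesis unfolding q_def using \<open>0 < r\<close> by (simp add: measure_def enn2real_leI less_imp_le)
  qed
  \<comment> \<open>\<open>\<phi>\<close> increases near every point: on \<open>U\<close> because \<open>q\<close> grows at rate 1 there, elsewhere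
    because \<open>G' \<ge> e > c\<close>.\<close>
  define \<phi> where "\<phi> x = G x - c * x + e * q x" for x
  have increasing_in_U: "\<phi> u < \<phi> v" if "y \<le> u" "u < v" "v \<le> y'" "{u<..v} \<subseteq> U" for u v
  proof -
    have "U \<inter> {u<..v} = {u<..v}" using that by auto
    then have "q v = q u + (v - u)"
      using measure_Int_atLeastAtMost_split[OF U, of y u v] that unfolding q_def by simp
    then have "\<phi> v - \<phi> u = (G v - G u) + (e - c) * (v - u)"
      unfolding \<phi>_def by (simp only:) (simp add: algebra_simps)
    moreover have "G u \<le> G v" using that y by (intro mono_onD[OF mono]) auto
    moreover have "0 < (e - c) * (v - u)" using that \<open>c < e\<close> by simp
    ultimately show ?thesis by linarith
  qed
  have "\<phi> y < \<phi> y'"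
  proof (rule strict_increasing_if_locally_increasing[OF \<open>y < y'\<close>])
    fix x assume x: "x \<in> {y..y'}"
    show "\<forall>\<^sub>F z in at x within {y..y'}. (z < x \<longrightarrow> \<phi> z < \<phi> x) \<and> (x < z \<longrightarrow> \<phi> x < \<phi> z)"
    proof (cases "x \<in> U")
      case True
      then obtain d where "d > 0" "ball x d \<subseteq> U" using \<open>open U\<close> open_contains_ball by blast
      then show ?thesis
        unfolding eventually_at using x
        by (intro exI[of _ d]) (auto intro!: increasing_in_U simp: subset_iff dist_real_def)
    next
      case False
      then obtain f where "(G has_real_derivative f) (at x)" "f \<ge> e" using deriv x by blast
      moreover have "mono (\<lambda>x. e * q x)" using \<open>mono q\<close> \<open>0 \<le> e\<close> by (simp add: mono_def mult_left_mono)
      ultimately have "\<forall>\<^sub>F z in at x. (z < x \<longrightarrow> \<phi> z < \<phi> x) \<and> (x < z \<longrightarrow> \<phi> x < \<phi> z)"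
        unfolding \<phi>_def using \<open>c < e\<close> by (intro eventually_strict_increasing_if_deriv_gt[where f = f]) auto
      then show ?thesis by (rule filter_leD[OF at_le, rotated]) simp
    qed
  qed
  moreover have "0 \<le> e * q y" unfolding q_def using \<open>0 \<le> e\<close> by simp
  moreover have "e * q y' \<le> e * r" using \<open>q y' \<le> r\<close> \<open>0 \<le> e\<close> by (rule mult_left_mono)
  ultimately show ?thesis unfolding \<phi>_def right_diff_distrib by linarith
qed

lemma mono_on_slope_ge_if_AE_deriv_ge:
  fixes G :: "real \<Rightarrow> real"
  assumes "mono_on {0<..<1} G" "0 \<le> e"
    and deriv: "AE x in lborel. x \<in> {0..1} \<longrightarrow> (\<exists>f. (G has_real_derivative f) (at x) \<and> f \<ge> e)"
    and y: "0 < y" "y < y'" "y' < 1"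
  shows "e * (y' - y) \<le> G y' - G y"
proof (rule tendsto_upperbound)
  obtain N where N: "N \<in> null_sets lborel"
    and deriv_outside: "\<And>x. x \<in> {0..1} \<Longrightarrow> x \<notin> N \<Longrightarrow> \<exists>f. (G has_real_derivative f) (at x) \<and> f \<ge> e"
    by (rule AE_E3[OF deriv]) auto
  have "(e - s) * (y' - y) - e * s \<le> G y' - G y" if "0 < s" for s
  proof -
    obtain U where "open U" "N \<subseteq> U" "emeasure lborel U < ennreal s"
      using null_set_subset_small_open[OF N \<open>0 < s\<close>] by blast
    moreover have "\<exists>f. (G has_real_derivative f) (at x) \<and> f \<ge> e" if "x \<in> {y..y'}" "x \<notin> U" for x
      using deriv_outside[of x] that y \<open>N \<subseteq> U\<close> by auto
    ultimately show ?thesis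
      using y \<open>0 < s\<close> by (intro slope_ge_if_deriv_ge_outside_small_open[OF assms(1) _ assms(2)]) auto
  qed
  then show "\<forall>\<^sub>F s in at_right 0. (e - s) * (y' - y) - e * s \<le> G y' - G y"
    using eventually_at_right_less by (rule eventually_mono[rotated])
  show "((\<lambda>s. (e - s) * (y' - y) - e * s) \<longlongrightarrow> e * (y' - y)) (at_right 0)"
    by (rule tendsto_eq_intros refl | simp)+
qed simp

lemma gen_inv_mono_on:
  assumes "\<And>x. x < 0 \<Longrightarrow> H x = 0" "H 1 = 1"
  shows "mono_on {0<..<1} (gen_inv H)"
proof (rule mono_onI)
  fix u v :: real assume "u \<in> {0<..<1}" "v \<in> {0<..<1}" "u \<le> v"
  moreover have "0 \<le> x" if "u < H x" for x
    using that \<open>u \<in> {0<..<1}\<close> assms(1)[of x] by (cases "x < 0") auto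
  ultimately show "gen_inv H u \<le> gen_inv H v"
    unfolding gen_inv_def using assms(2)
    by (intro cInf_superset_mono bdd_belowI[of _ 0]) (auto intro!: exI[of _ 1])
qed

lemma le_gen_inv:
  assumes "mono H" "H 1 = 1" "H a < y" "y < 1"
  shows "a \<le> gen_inv H y"
  unfolding gen_inv_def
proof (rule cInf_greatest)
  show "{x. y < H x} \<noteq> {}" using assms(2,4) by (auto intro!: exI[of _ 1])
  show "a \<le> x" if "x \<in> {x. y < H x}" for x
    using that assms monoD[OF \<open>mono H\<close>, of x a] by (cases "a \<le> x") auto
qed

lemma gen_inv_le:
  assumes "\<And>x. x < 0 \<Longrightarrow> H x = 0" "0 \<le> y" "y < H b"
  shows "gen_inv H y \<le> b"
  unfolding gen_inv_def using assms
  by (intro cInf_lower) (force intro!: bdd_belowI[of _ 0] simp: not_le[symmetric])+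

lemma cdf_lipschitz_if_gen_inv_deriv_ge:
  fixes H :: "real \<Rightarrow> real"
  assumes "mono H" and H_neg: "\<And>x. x < 0 \<Longrightarrow> H x = 0" and H_one: "\<And>x. x \<ge> 1 \<Longrightarrow> H x = 1"
    and "0 \<le> e"
    and deriv: "AE x in lborel. x \<in> {0..1} \<longrightarrow> (\<exists>f. (gen_inv H has_real_derivative f) (at x) \<and> f \<ge> e)"
    and "a \<le> b"
  shows "e * (H b - H a) \<le> b - a"
proof (cases "H a < H b")
  case True
  have H_bounds: "0 \<le> H x" "H x \<le> 1" for x
    using monoD[OF \<open>mono H\<close>, of "-1" x] monoD[OF \<open>mono H\<close>, of x "max x 1"]
      H_neg[of "-1"] H_neg[of x] H_one[of "max x 1"]
    by (cases "x < -1"; simp)+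
  have "e * ((H b - s) - (H a + s)) \<le> b - a" if s: "0 < s" "2 * s < H b - H a" for s
  proof -
    have "e * ((H b - s) - (H a + s)) \<le> gen_inv H (H b - s) - gen_inv H (H a + s)"
      using H_bounds[of a] H_bounds[of b] s
      by (intro mono_on_slope_ge_if_AE_deriv_ge gen_inv_mono_on assms) auto
    moreover have "a \<le> gen_inv H (H a + s)"
      using H_bounds[of b] s by (intro le_gen_inv assms) auto
    moreover have "gen_inv H (H b - s) \<le> b"
      using H_bounds[of a] s by (intro gen_inv_le assms) auto
    ultimately show ?thesis by linarith
  qed
  then have "\<forall>\<^sub>F s in at_right 0. e * ((H b - s) - (H a + s)) \<le> b - a"
    using eventually_at_right_real[of 0 "(H b - H a) / 2"] True
    by (auto elim!: eventually_mono)
  moreover have "((\<lambda>s. e * ((H b - s) - (H a + s))) \<longlongrightarrow> e * (H b - H a)) (at_right 0)"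
    by (rule tendsto_eq_intros refl | simp)+
  ultimately show ?thesis by (intro tendsto_upperbound) auto
next
  case False
  then show ?thesis using \<open>0 \<le> e\<close> \<open>a \<le> b\<close> mult_nonneg_nonpos[of e "H b - H a"] by auto
qed

section \<open>Logarithms of spacings\<close>

definition log_spacing_mean :: "real list \<Rightarrow> real" where
  "log_spacing_mean xs =
     (let K = length xs + 1 in (1 / real K) * (\<Sum>i = 1..K. log (real K) (spacing xs i)))"

definition close_index_pairs :: "real list \<Rightarrow> real \<Rightarrow> (nat \<times> nat) set" where
  "close_index_pairs xs t = {(j, l). j < length xs \<and> l < length xs \<and> j \<noteq> l \<and> \<bar>xs ! j - xs ! l\<bar> < t}"

lemma log_spacing_mean_eq_sum_ln:
  "log_spacing_mean xs =
     (\<Sum>i = 1..length xs + 1. ln (spacing xs i)) / (real (length xs + 1) * ln (real (length xs + 1)))"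
  by (simp only: log_spacing_mean_def Let_def log_def mult_1_left times_divide_eq_left
      times_divide_eq_right divide_divide_eq_left flip: sum_divide_distrib)

lemma spacing_eq_padded_diff:
  assumes "xs \<noteq> []" "1 \<le> i" "i \<le> length xs + 1"
  shows "spacing xs i = (1 # rev (sort xs) @ [0]) ! (i - 1) - (1 # rev (sort xs) @ [0]) ! i"
proof -
  have "length (rev (sort xs)) = length xs" by simp
  then show ?thesis
    using assms unfolding spacing_def order_stat_def Let_def
    by (cases "i = 1"; cases "i = length xs + 1") (auto simp: nth_Cons' nth_append)
qed

lemma spacing_interior:
  assumes "2 \<le> i" "i \<le> length xs"
  shows "spacing xs i = rev (sort xs) ! (i - 2) - rev (sort xs) ! (i - 1)"
  using assms unfolding spacing_def order_stat_def Let_def by (simp add: diff_diff_left numeral_2_eq_2)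

lemma sum_spacing:
  assumes "xs \<noteq> []"
  shows "(\<Sum>i = 1..length xs + 1. spacing xs i) = 1"
proof -
  define zs where "zs = 1 # rev (sort xs) @ [0 :: real]"
  have "(\<Sum>i = 1..length xs + 1. spacing xs i) = (\<Sum>i = 1..length xs + 1. zs ! (i - 1) - zs ! i)"
    using spacing_eq_padded_diff[OF assms] unfolding zs_def by (intro sum.cong) auto
  also have "\<dots> = (\<Sum>k < length xs + 1. zs ! k - zs ! Suc k)"
    unfolding One_nat_def sum.atLeast1_atMost_eq by simp
  also have "\<dots> = zs ! 0 - zs ! (length xs + 1)" by (rule sum_lessThan_telescope')
  finally show ?thesis by (simp add: zs_def nth_append)
qed

lemma sum_ln_le_of_sum_eq_1:
  assumes "finite A" "\<And>i. i \<in> A \<Longrightarrow> 0 < D i" "sum D A = 1"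
  shows "(\<Sum>i\<in>A. ln (D i)) \<le> - real (card A) * ln (real (card A))"
proof -
  have "A \<noteq> {}" using assms(3) by auto
  then have K: "0 < real (card A)" using assms(1) by (simp add: card_gt_0_iff)
  have "(\<Sum>i\<in>A. ln (real (card A)) + ln (D i)) \<le> (\<Sum>i\<in>A. real (card A) * D i - 1)"
  proof (rule sum_mono)
    fix i assume "i \<in> A"
    then have "ln (real (card A) * D i) \<le> real (card A) * D i - 1"
      using K assms(2) by (intro ln_le_minus_one) simp
    then show "ln (real (card A)) + ln (D i) \<le> real (card A) * D i - 1"
      using K assms(2)[OF \<open>i \<in> A\<close>] by (simp add: ln_mult)
  qed
  also have "\<dots> = 0" using assms(3) by (simp add: sum_subtractf flip: sum_distrib_left)
  finally show ?thesis by (simp add: sum.distrib)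
qed

lemma sum_ln_ge_threshold:
  assumes "finite A" "\<And>i. i \<in> A \<Longrightarrow> m \<le> D i" "0 < m" "0 < t" "t \<le> 1"
  shows "real (card A) * ln t + real (card {i \<in> A. D i < t}) * ln m \<le> (\<Sum>i\<in>A. ln (D i))"
proof -
  have "real (card A) * ln t + real (card {i \<in> A. D i < t}) * ln m
      = (\<Sum>i\<in>A. ln t + (if D i < t then ln m else 0))"
    using assms(1) by (simp add: sum.distrib sum.If_cases Int_def conj_commute)
  also have "\<dots> \<le> (\<Sum>i\<in>A. ln (D i))"
  proof (rule sum_mono)
    fix i assume "i \<in> A"
    then have "m \<le> D i" by (rule assms(2))
    then have "ln m \<le> ln (D i)" "\<not> D i < t \<Longrightarrow> ln t \<le> ln (D i)"
      using assms(3,4) by auto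
    moreover have "ln t \<le> 0" using assms(4,5) by simp
    ultimately show "ln t + (if D i < t then ln m else 0) \<le> ln (D i)"
      by (cases "D i < t") auto
  qed
  finally show ?thesis .
qed

definition separated :: "real \<Rightarrow> real list \<Rightarrow> bool" where
  "separated s xs \<longleftrightarrow> (\<forall>x\<in>set xs. s \<le> x \<and> x \<le> 1 - s)
     \<and> (\<forall>j < length xs. \<forall>l < length xs. j \<noteq> l \<longrightarrow> s \<le> \<bar>xs ! j - xs ! l\<bar>)"

lemma separated_values:
  assumes "separated s xs" "x \<in> set xs" "y \<in> set xs" "x \<noteq> y"
  shows "s \<le> \<bar>x - y\<bar>"
proof -
  obtain j l where "j < length xs" "l < length xs" "x = xs ! j" "y = xs ! l"
    using assms(2,3) by (auto simp: in_set_conv_nth)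
  then show ?thesis using assms(1,4) unfolding separated_def by blast
qed

lemma separated_distinct: "separated s xs \<Longrightarrow> 0 < s \<Longrightarrow> distinct xs"
  unfolding separated_def distinct_conv_nth by force

lemma rev_sort_nth_less:
  assumes "distinct xs" "k < k'" "k' < length xs"
  shows "rev (sort xs) ! k' < rev (sort xs) ! k"
proof -
  have "sorted_wrt (<) (sort xs)" using assms(1) by (simp add: strict_sorted_iff)
  then have "sort xs ! (length xs - 1 - k') < sort xs ! (length xs - 1 - k)"
    by (rule sorted_wrt_nth_less) (use assms(2,3) in auto)
  then show ?thesis using assms(2,3) by (simp add: rev_nth)
qed

lemma separated_spacing_ge:
  assumes "separated s xs" "0 < s" "xs \<noteq> []" "1 \<le> i" "i \<le> length xs + 1"
  shows "s \<le> spacing xs i"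
proof -
  define ys where "ys = rev (sort xs)"
  have ys: "length ys = length xs" "\<And>k. k < length xs \<Longrightarrow> ys ! k \<in> set xs"
    unfolding ys_def by (simp, metis length_rev length_sort nth_mem set_rev set_sort)
  have in_range: "s \<le> ys ! k \<and> ys ! k \<le> 1 - s" if "k < length xs" for k
    using assms(1) ys(2)[OF that] unfolding separated_def by blast
  consider "i = 1" | "i = length xs + 1" | "2 \<le> i" "i \<le> length xs"
    using assms(4,5) by linarith
  then show ?thesis
  proof cases
    case 1
    then show ?thesis using spacing_eq_padded_diff[OF assms(3-5)] in_range[of 0] assms(3) ys(1)
      by (simp add: ys_def nth_append)
  next
    case 2
    then show ?thesis using spacing_eq_padded_diff[OF assms(3-5)] in_range[of "length xs - 1"] assms(3) ys(1)
      by (simp add: ys_def nth_append)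
  next
    case 3
    have less: "ys ! (i - 1) < ys ! (i - 2)"
      unfolding ys_def using 3 separated_distinct[OF assms(1,2)] by (intro rev_sort_nth_less) auto
    have "s \<le> \<bar>ys ! (i - 2) - ys ! (i - 1)\<bar>"
      using less 3 by (intro separated_values[OF assms(1)] ys(2)) auto
    moreover have "spacing xs i = ys ! (i - 2) - ys ! (i - 1)"
      using spacing_interior 3 unfolding ys_def by blast
    ultimately show ?thesis using less by simp
  qed
qed

lemma card_small_spacings_le:
  assumes "distinct xs"
  shows "card {i \<in> {2..length xs}. spacing xs i < t} \<le> card (close_index_pairs xs t)"
proof -
  define ys where "ys = rev (sort xs)"
  define S where "S = {i \<in> {2..length xs}. spacing xs i < t}"
  define V where "V = {(x, y). x \<in> set xs \<and> y \<in> set xs \<and> x \<noteq> y \<and> \<bar>x - y\<bar> < t}"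
  have ys: "length ys = length xs" "distinct ys" "\<And>k. k < length xs \<Longrightarrow> ys ! k \<in> set xs"
    unfolding ys_def using assms by (simp, simp, metis length_rev length_sort nth_mem set_rev set_sort)
  have "inj_on (\<lambda>i. (ys ! (i - 2), ys ! (i - 1))) S"
  proof (rule inj_onI)
    fix i i' assume "i \<in> S" "i' \<in> S" "(ys ! (i - 2), ys ! (i - 1)) = (ys ! (i' - 2), ys ! (i' - 1))"
    then have "i - 2 = i' - 2" using ys(1,2) unfolding S_def by (auto simp: nth_eq_iff_index_eq)
    then show "i = i'" using \<open>i \<in> S\<close> \<open>i' \<in> S\<close> unfolding S_def by auto
  qed
  moreover have "(\<lambda>i. (ys ! (i - 2), ys ! (i - 1))) ` S \<subseteq> V"
  proof clarify
    fix i assume i: "i \<in> S"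
    then have "ys ! (i - 1) < ys ! (i - 2)"
      unfolding ys_def S_def using assms by (intro rev_sort_nth_less) auto
    moreover have "spacing xs i = ys ! (i - 2) - ys ! (i - 1)"
      using i spacing_interior[of i xs] unfolding S_def ys_def by simp
    ultimately show "(ys ! (i - 2), ys ! (i - 1)) \<in> V"
      using i ys(3) unfolding S_def V_def by auto
  qed
  moreover have "V \<subseteq> (\<lambda>(j, l). (xs ! j, xs ! l)) ` close_index_pairs xs t"
    unfolding V_def close_index_pairs_def by (force simp: in_set_conv_nth)
  moreover have "finite (close_index_pairs xs t)"
    unfolding close_index_pairs_def
    by (rule finite_subset[of _ "{..<length xs} \<times> {..<length xs}"]) auto
  ultimately have "card S \<le> card V"
    by (meson card_inj_on_le finite_imageI finite_subset)
  also have "\<dots> \<le> card (close_index_pairs xs t)"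
    using \<open>V \<subseteq> _\<close> \<open>finite (close_index_pairs xs t)\<close> by (meson card_image_le card_mono finite_imageI le_trans)
  finally show ?thesis unfolding S_def .
qed

lemma sum_ln_spacing_ge:
  assumes "separated s xs" "0 < s" "s \<le> 1" "xs \<noteq> []" "0 < t" "t \<le> 1"
  shows "real (length xs + 1) * ln t + real (card (close_index_pairs xs t) + 2) * ln s
           \<le> (\<Sum>i = 1..length xs + 1. ln (spacing xs i))"
proof -
  define small where "small = {i \<in> {1..length xs + 1}. spacing xs i < t}"
  have "small \<subseteq> {1, length xs + 1} \<union> {i \<in> {2..length xs}. spacing xs i < t}"
    unfolding small_def by auto
  then have "card small \<le> card {1, length xs + 1} + card {i \<in> {2..length xs}. spacing xs i < t}"
    by (intro order_trans[OF card_mono card_Un_le]) auto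
  also have "\<dots> \<le> 2 + card (close_index_pairs xs t)"
    using card_small_spacings_le[OF separated_distinct[OF assms(1,2)], of t]
    by (intro add_mono) (auto simp: card_insert_le_m1)
  finally have "real (card (close_index_pairs xs t) + 2) * ln s \<le> real (card small) * ln s"
    using assms(2,3) by (intro mult_right_mono_neg) auto
  moreover have "real (card {1..length xs + 1}) * ln t + real (card small) * ln s
      \<le> (\<Sum>i = 1..length xs + 1. ln (spacing xs i))"
    unfolding small_def using assms separated_spacing_ge by (intro sum_ln_ge_threshold) auto
  ultimately show ?thesis by simp
qed

lemma log_spacing_mean_le:
  assumes "xs \<noteq> []" "\<And>i. 1 \<le> i \<Longrightarrow> i \<le> length xs + 1 \<Longrightarrow> 0 < spacing xs i"
  shows "log_spacing_mean xs \<le> -1"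
proof -
  define K where "K = length xs + 1"
  have "0 < real K * ln (real K)" using assms(1) by (simp add: K_def)
  have "sum (spacing xs) {1..K} = 1" using sum_spacing[OF assms(1)] by (simp add: K_def)
  moreover have "\<And>i. i \<in> {1..K} \<Longrightarrow> 0 < spacing xs i" using assms(2) by (simp add: K_def)
  ultimately have "(\<Sum>i = 1..K. ln (spacing xs i)) \<le> - real (card {1..K}) * ln (real (card {1..K}))"
    by (intro sum_ln_le_of_sum_eq_1) auto
  then have "(\<Sum>i = 1..K. ln (spacing xs i)) \<le> - real K * ln (real K)" by simp
  then have "(\<Sum>i = 1..K. ln (spacing xs i)) / (real K * ln (real K)) \<le> -1"
    using \<open>0 < real K * ln (real K)\<close> by (simp add: pos_divide_le_eq)
  then show ?thesis unfolding log_spacing_mean_eq_sum_ln K_def .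
qed

lemma separated_log_spacing_mean_le:
  assumes "separated s xs" "0 < s" "xs \<noteq> []"
  shows "log_spacing_mean xs \<le> -1"
  using order.strict_trans2[OF assms(2) separated_spacing_ge[OF assms]]
  by (intro log_spacing_mean_le[OF assms(3)]) blast

lemma log_spacing_mean_ge:
  fixes xs :: "real list" and t \<delta> :: real
  defines "K \<equiv> length xs + 1"
  assumes "xs \<noteq> []" "separated (1 / real K ^ 4) xs" "0 < t" "t \<le> 1"
    and "-(1 + \<delta>) * ln (2 * real K) \<le> ln t" "real (card (close_index_pairs xs t)) \<le> \<delta> * real K"
  shows "-1 - 5 * \<delta> - (1 + \<delta>) * ln 2 / ln (real K) - 8 / real K \<le> log_spacing_mean xs"
proof -
  have "2 \<le> K" using assms(2) by (simp add: K_def Suc_le_eq)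
  then have lnK: "0 < ln (real K)" by simp
  have ln_sep: "ln (1 / real K ^ 4) = - 4 * ln (real K)"
    using \<open>2 \<le> K\<close> by (simp add: ln_div ln_realpow)
  have "real K * (- (1 + \<delta>) * ln (2 * real K)) + (\<delta> * real K + 2) * (- 4 * ln (real K))
      \<le> real K * ln t + real (card (close_index_pairs xs t) + 2) * ln (1 / real K ^ 4)"
    unfolding ln_sep using assms(6,7) lnK by (intro add_mono mult_left_mono mult_right_mono_neg) auto
  also have "\<dots> \<le> (\<Sum>i = 1..K. ln (spacing xs i))"
    unfolding K_def using assms(2-5) \<open>2 \<le> K\<close> by (intro sum_ln_spacing_ge) (auto simp: K_def)
  finally have "(real K * (- (1 + \<delta>) * ln (2 * real K)) + (\<delta> * real K + 2) * (- 4 * ln (real K)))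
      / (real K * ln (real K)) \<le> log_spacing_mean xs"
    unfolding log_spacing_mean_eq_sum_ln K_def[symmetric] using lnK \<open>2 \<le> K\<close>
    by (intro divide_right_mono) auto
  also have "(real K * (- (1 + \<delta>) * ln (2 * real K)) + (\<delta> * real K + 2) * (- 4 * ln (real K)))
      / (real K * ln (real K)) = -1 - 5 * \<delta> - (1 + \<delta>) * ln 2 / ln (real K) - 8 / real K"
    using lnK \<open>2 \<le> K\<close> by (simp add: ln_mult field_simps)
  finally show ?thesis .
qed

section \<open>Spacings of a random sample\<close>

definition index_pairs :: "nat \<Rightarrow> (nat \<times> nat) set" where
  "index_pairs n = {p \<in> {1..<n} \<times> {1..<n}. fst p \<noteq> snd p}"

lemma finite_index_pairs [simp]: "finite (index_pairs n)"
  unfolding index_pairs_def by (rule finite_subset[of _ "{1..<n} \<times> {1..<n}"]) auto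

lemma card_index_pairs_le: "card (index_pairs n) \<le> n * n"
proof -
  have "card (index_pairs n) \<le> card ({1..<n} \<times> {1..<n})"
    unfolding index_pairs_def by (intro card_mono) auto
  also have "\<dots> \<le> n * n" by (simp add: mult_le_mono)
  finally show ?thesis .
qed

definition close_ratio :: "real \<Rightarrow> real" where
  "close_ratio \<delta> = 2 powr - (1 + \<delta>)"

lemma close_ratio_pos: "0 < close_ratio \<delta>"
  unfolding close_ratio_def by simp

lemma two_close_ratio_less_1:
  assumes "0 < \<delta>"
  shows "2 * close_ratio \<delta> < 1"
proof -
  have "2 * close_ratio \<delta> = 2 powr 1 * 2 powr - (1 + \<delta>)" unfolding close_ratio_def by simp
  also have "\<dots> = 2 powr - \<delta>" by (simp only: powr_add[symmetric]) simp
  also have "\<dots> < 2 powr 0" using assms by (intro powr_less_mono) auto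
  finally show ?thesis by simp
qed

lemma ln_close_ratio_power_ge:
  assumes "0 \<le> \<delta>" "2 ^ (m + 1) \<le> 2 * real K"
  shows "- (1 + \<delta>) * ln (2 * real K) \<le> ln (close_ratio \<delta> ^ (m + 1))"
proof -
  have ln_eq: "ln (close_ratio \<delta> ^ (m + 1)) = - (1 + \<delta>) * (real (m + 1) * ln 2)"
    by (subst ln_realpow) (simp add: close_ratio_def ln_powr)
  have ln_pow: "real (m + 1) * ln 2 = ln (2 ^ (m + 1))" by (rule ln_realpow[symmetric])
  have "(0 :: real) < 2 ^ (m + 1)" by simp
  then have "ln (2 ^ (m + 1)) \<le> ln (2 * real K)"
    using assms(2) by (subst ln_le_cancel_iff) linarith+
  then have "- (1 + \<delta>) * ln (2 * real K) \<le> - (1 + \<delta>) * ln (2 ^ (m + 1))"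
    by (rule mult_left_mono_neg) (use assms(1) in simp)
  then show ?thesis unfolding ln_eq ln_pow .
qed

lemma eventually_dyadic_block:
  assumes "\<forall>\<^sub>F m in sequentially. P m"
  shows "\<forall>\<^sub>F K in sequentially. \<exists>m. P m \<and> 2 ^ m \<le> K \<and> K < 2 ^ (m + 1)"
proof -
  obtain M0 where M0: "\<And>m. M0 \<le> m \<Longrightarrow> P m" using assms unfolding eventually_sequentially by blast
  have "\<exists>m. P m \<and> 2 ^ m \<le> K \<and> K < 2 ^ (m + 1)" if "2 ^ M0 \<le> K" for K :: nat
  proof -
    have "1 \<le> K" using that one_le_power[of "2 :: nat" M0] by linarith
    then obtain m where m: "2 ^ m \<le> K" "K < 2 ^ (m + 1)"
      using ex_power_ivl1[of 2 K] by auto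
    then have "(2::nat) ^ M0 < 2 ^ (m + 1)" using that by linarith
    then have "M0 < m + 1" by (rule power_less_imp_less_exp[rotated]) simp
    then have "M0 \<le> m" by simp
    then show ?thesis using M0 m by blast
  qed
  then show ?thesis unfolding eventually_sequentially by blast
qed

lemma tendsto_of_eventually_bounds:
  fixes f :: "nat \<Rightarrow> real"
  assumes "\<forall>\<^sub>F n in sequentially. f n \<le> c"
    and "\<And>k. \<forall>\<^sub>F n in sequentially. c - 1 / (real k + 1) \<le> f n"
  shows "f \<longlonglongrightarrow> c"
proof (rule tendstoI)
  fix r :: real assume "0 < r"
  then obtain k where "1 / (real k + 1) < r"
    using ex_inverse_of_nat_less[OF \<open>0 < r\<close>]
    by (metis Suc_pred add.commute inverse_eq_divide of_nat_Suc)
  show "\<forall>\<^sub>F n in sequentially. dist (f n) c < r"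
    using assms(1) assms(2)[of k]
  proof eventually_elim
    case (elim n)
    then show ?case using \<open>1 / (real k + 1) < r\<close> by (simp add: dist_real_def)
  qed
qed

locale lipschitz_cdf_sample = prob_space M for M :: "'a measure" +
  fixes X :: "nat \<Rightarrow> 'a \<Rightarrow> real" and H :: "real \<Rightarrow> real" and L :: real
  assumes indep: "indep_vars (\<lambda>_. borel) X {1..}"
    and cdf: "\<And>i x. 1 \<le> i \<Longrightarrow> prob {\<omega> \<in> space M. X i \<omega> \<le> x} = H x"
    and lipschitz: "\<And>a b. a \<le> b \<Longrightarrow> H b - H a \<le> L * (b - a)"
    and H_0: "H 0 = 0" and H_1: "H 1 = 1"
begin

lemma X_measurable [measurable]: "1 \<le> i \<Longrightarrow> X i \<in> borel_measurable M"
  using indep unfolding indep_vars_def by auto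

lemma L_pos: "0 < L"
  using lipschitz[of 0 1] H_0 H_1 by simp

lemma prob_Ioc_le:
  assumes "1 \<le> i" "a \<le> b"
  shows "prob {\<omega> \<in> space M. a < X i \<omega> \<and> X i \<omega> \<le> b} \<le> L * (b - a)"
proof -
  have "{\<omega> \<in> space M. a < X i \<omega> \<and> X i \<omega> \<le> b}
      = {\<omega> \<in> space M. X i \<omega> \<le> b} - {\<omega> \<in> space M. X i \<omega> \<le> a}" by auto
  then have "prob {\<omega> \<in> space M. a < X i \<omega> \<and> X i \<omega> \<le> b} = H b - H a"
    using assms cdf[OF assms(1)] by (simp add: finite_measure_Diff subset_iff)
  then show ?thesis using lipschitz[OF assms(2)] by simp
qed

lemma prob_below_le: "1 \<le> i \<Longrightarrow> 0 \<le> t \<Longrightarrow> prob {\<omega> \<in> space M. X i \<omega> \<le> t} \<le> L * t"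
  using cdf lipschitz[of 0 t] H_0 by simp

lemma prob_above_le:
  assumes "1 \<le> i" "0 \<le> t"
  shows "prob {\<omega> \<in> space M. 1 - t < X i \<omega>} \<le> L * t"
proof -
  have "{\<omega> \<in> space M. 1 - t < X i \<omega>} = space M - {\<omega> \<in> space M. X i \<omega> \<le> 1 - t}" by auto
  then have "prob {\<omega> \<in> space M. 1 - t < X i \<omega>} = 1 - H (1 - t)"
    using assms cdf[OF assms(1)] by (simp add: prob_compl)
  then show ?thesis using lipschitz[of "1 - t" 1] H_1 assms(2) by simp
qed

lemma indep_var_X:
  assumes "1 \<le> j" "1 \<le> l" "j \<noteq> l"
  shows "indep_var borel (X j) borel (X l)"
proof -
  have "indep_var (PiM {j} (\<lambda>_. borel)) (\<lambda>\<omega>. restrict (\<lambda>i. X i \<omega>) {j})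
     (PiM {l} (\<lambda>_. borel)) (\<lambda>\<omega>. restrict (\<lambda>i. X i \<omega>) {l})"
    by (rule indep_var_restrict[OF indep]) (use assms in auto)
  then have "indep_var borel ((\<lambda>f. f j) \<circ> (\<lambda>\<omega>. restrict (\<lambda>i. X i \<omega>) {j}))
     borel ((\<lambda>f. f l) \<circ> (\<lambda>\<omega>. restrict (\<lambda>i. X i \<omega>) {l}))"
    by (rule indep_var_compose) (auto intro: measurable_component_singleton)
  then show ?thesis by (simp add: comp_def)
qed

lemma prob_close_le:
  assumes jl: "1 \<le> j" "1 \<le> l" "j \<noteq> l" and "0 \<le> t"
  shows "prob {\<omega> \<in> space M. \<bar>X j \<omega> - X l \<omega>\<bar> < t} \<le> 2 * L * t"
proof -
  have rv: "X j \<in> borel_measurable M" "X l \<in> borel_measurable M" using jl by auto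
  interpret Pj: prob_space "distr M borel (X j)" by (rule prob_space_distr[OF rv(1)])
  interpret Pl: prob_space "distr M borel (X l)" by (rule prob_space_distr[OF rv(2)])
  define A where "A = {p :: real \<times> real. \<bar>fst p - snd p\<bar> < t}"
  have "A = {p \<in> space (borel \<Otimes>\<^sub>M borel). \<bar>fst p - snd p\<bar> < t}"
    unfolding A_def by (simp add: space_pair_measure)
  also have "\<dots> \<in> sets (borel \<Otimes>\<^sub>M borel)" by measurable
  finally have A: "A \<in> sets (borel \<Otimes>\<^sub>M borel)" .
  have "emeasure M {\<omega> \<in> space M. \<bar>X j \<omega> - X l \<omega>\<bar> < t}
      = emeasure (distr M (borel \<Otimes>\<^sub>M borel) (\<lambda>\<omega>. (X j \<omega>, X l \<omega>))) A"
    by (subst emeasure_distr) (use A rv in \<open>auto simp: A_def Int_def conj_commute\<close>)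
  also have "\<dots> = emeasure (distr M borel (X j) \<Otimes>\<^sub>M distr M borel (X l)) A"
    using indep_var_X[OF jl] by (simp add: indep_var_distribution_eq)
  also have "\<dots> = (\<integral>\<^sup>+x. emeasure (distr M borel (X l)) (Pair x -` A) \<partial>distr M borel (X j))"
    using A by (simp add: Pl.emeasure_pair_measure_alt)
  also have "\<dots> \<le> (\<integral>\<^sup>+x. ennreal (2 * L * t) \<partial>distr M borel (X j))"
  proof (rule nn_integral_mono)
    fix x
    have "emeasure (distr M borel (X l)) (Pair x -` A)
        \<le> emeasure (distr M borel (X l)) {y. x - t < y \<and> y \<le> x + t}"
      unfolding A_def by (intro emeasure_mono) auto
    also have "\<dots> = emeasure M {\<omega> \<in> space M. x - t < X l \<omega> \<and> X l \<omega> \<le> x + t}"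
      by (subst emeasure_distr) (auto simp: rv vimage_def Int_def conj_commute)
    also have "\<dots> = ennreal (prob {\<omega> \<in> space M. x - t < X l \<omega> \<and> X l \<omega> \<le> x + t})"
      by (simp add: emeasure_eq_measure)
    also have "\<dots> \<le> ennreal (2 * L * t)"
      using prob_Ioc_le[of l "x - t" "x + t"] jl \<open>0 \<le> t\<close> by (intro ennreal_leI) auto
    finally show "emeasure (distr M borel (X l)) (Pair x -` A) \<le> ennreal (2 * L * t)" .
  qed
  also have "\<dots> = ennreal (2 * L * t)" using Pj.emeasure_space_1 by simp
  finally show ?thesis using L_pos \<open>0 \<le> t\<close> by (simp add: emeasure_eq_measure ennreal_le_iff)
qed

definition close_pairs :: "(nat \<times> nat) set \<Rightarrow> real \<Rightarrow> 'a \<Rightarrow> (nat \<times> nat) set" where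
  "close_pairs P t \<omega> = {p \<in> P. \<bar>X (fst p) \<omega> - X (snd p) \<omega>\<bar> < t}"

definition close_event :: "nat \<times> nat \<Rightarrow> real \<Rightarrow> 'a set" where
  "close_event p t = {\<omega> \<in> space M. \<bar>X (fst p) \<omega> - X (snd p) \<omega>\<bar> < t}"

lemma close_event_sets [measurable]: "1 \<le> fst p \<Longrightarrow> 1 \<le> snd p \<Longrightarrow> close_event p t \<in> sets M"
  unfolding close_event_def by measurable

lemma card_close_pairs_eq_sum_indicator:
  assumes "finite P" "\<omega> \<in> space M"
  shows "real (card (close_pairs P t \<omega>)) = (\<Sum>p\<in>P. indicator (close_event p t) \<omega>)"
proof -
  have "(\<Sum>p\<in>P. indicator (close_event p t) \<omega>)
      = (\<Sum>p\<in>P. if \<bar>X (fst p) \<omega> - X (snd p) \<omega>\<bar> < t then 1 else 0 :: real)"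
    using assms(2) by (intro sum.cong) (auto simp: indicator_def close_event_def)
  also have "\<dots> = real (card (close_pairs P t \<omega>))"
    using assms(1) by (simp add: sum.If_cases close_pairs_def Int_def conj_commute)
  finally show ?thesis by simp
qed

lemma prob_card_close_pairs_ge_le:
  assumes P: "finite P" "\<And>p. p \<in> P \<Longrightarrow> 1 \<le> fst p \<and> 1 \<le> snd p \<and> fst p \<noteq> snd p"
    and "0 \<le> t" "0 < c"
  shows "prob {\<omega> \<in> space M. c \<le> real (card (close_pairs P t \<omega>))} \<le> real (card P) * (2 * L * t) / c"
proof -
  define u where "u \<omega> = (\<Sum>p\<in>P. indicator (close_event p t) \<omega> :: real)" for \<omega>
  have integrable: "integrable M (indicator (close_event p t) :: 'a \<Rightarrow> real)" if "p \<in> P" for p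
    using P(2)[OF that] by (intro integrable_real_indicator) (auto simp: less_top[symmetric])
  have "{\<omega> \<in> space M. c \<le> real (card (close_pairs P t \<omega>))} = {\<omega> \<in> space M. c \<le> u \<omega>}"
    using card_close_pairs_eq_sum_indicator[OF P(1)] unfolding u_def by auto
  also have "prob \<dots> \<le> (\<integral>\<omega>. u \<omega> \<partial>M) / c"
    using integrable \<open>0 < c\<close> unfolding u_def
    by (intro integral_Markov_inequality_measure[where A = "space M"]) (auto intro!: sum_nonneg)
  also have "(\<integral>\<omega>. u \<omega> \<partial>M) = (\<Sum>p\<in>P. prob (close_event p t))"
    unfolding u_def using integrable P(2)
    by (subst Bochner_Integration.integral_sum) (auto intro!: sum.cong simp: close_event_def)
  also have "\<dots> \<le> (\<Sum>p\<in>P. 2 * L * t)"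
    using P(2) \<open>0 \<le> t\<close> unfolding close_event_def by (intro sum_mono prob_close_le) auto
  finally show ?thesis using \<open>0 < c\<close> by (simp add: divide_right_mono)
qed

definition unseparated_event :: "nat \<Rightarrow> 'a set" where
  "unseparated_event K =
     (\<Union>j\<in>{1..<K}. {\<omega> \<in> space M. X j \<omega> \<le> 1 / real K ^ 4 \<or> 1 - 1 / real K ^ 4 < X j \<omega>})
     \<union> (\<Union>p\<in>index_pairs K. close_event p (1 / real K ^ 4))"

lemma unseparated_event_sets [measurable]: "unseparated_event K \<in> sets M"
proof -
  have "{\<omega> \<in> space M. X j \<omega> \<le> s \<or> 1 - s < X j \<omega>} \<in> sets M" if "1 \<le> j" for j s
    using that by measurable
  then show ?thesis
    unfolding unseparated_event_def by (intro sets.Un sets.finite_UN) (auto simp: index_pairs_def)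
qed

lemma separated_if_not_unseparated_event:
  assumes "\<omega> \<in> space M" "\<omega> \<notin> unseparated_event K"
  shows "separated (1 / real K ^ 4) (map (\<lambda>j. X j \<omega>) [1..<K])"
  unfolding separated_def
proof (rule conjI; intro ballI allI impI)
  fix x assume "x \<in> set (map (\<lambda>j. X j \<omega>) [1..<K])"
  then obtain j where "j \<in> {1..<K}" "x = X j \<omega>" by auto
  then have "\<not> (X j \<omega> \<le> 1 / real K ^ 4 \<or> 1 - 1 / real K ^ 4 < X j \<omega>)"
    using assms unfolding unseparated_event_def by blast
  then show "1 / real K ^ 4 \<le> x \<and> x \<le> 1 - 1 / real K ^ 4" using \<open>x = X j \<omega>\<close> by linarith
next
  fix j l assume jl: "j < length (map (\<lambda>j. X j \<omega>) [1..<K])" "l < length (map (\<lambda>j. X j \<omega>) [1..<K])" "j \<noteq> l"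
  then have "(j + 1, l + 1) \<in> index_pairs K" unfolding index_pairs_def by auto
  then have "\<omega> \<notin> close_event (j + 1, l + 1) (1 / real K ^ 4)"
    using assms(2) unfolding unseparated_event_def by blast
  then show "1 / real K ^ 4 \<le> \<bar>map (\<lambda>j. X j \<omega>) [1..<K] ! j - map (\<lambda>j. X j \<omega>) [1..<K] ! l\<bar>"
    using jl assms(1) by (simp add: close_event_def nth_map_upt add.commute)
qed

lemma prob_unseparated_event_le:
  assumes "1 \<le> K"
  shows "prob (unseparated_event K) \<le> 4 * L / real K ^ 2"
proof -
  define s where "s = 1 / real K ^ 4"
  have "0 \<le> s" unfolding s_def by simp
  have "prob (unseparated_event K)
      \<le> (\<Sum>j\<in>{1..<K}. prob {\<omega> \<in> space M. X j \<omega> \<le> s \<or> 1 - s < X j \<omega>})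
        + (\<Sum>p\<in>index_pairs K. prob (close_event p s))"
    unfolding unseparated_event_def s_def[symmetric]
    by (intro order_trans[OF measure_Un_le] add_mono measure_UNION_le)
      (auto simp: index_pairs_def)
  also have "\<dots> \<le> (\<Sum>j\<in>{1..<K}. 2 * L * s) + (\<Sum>p\<in>index_pairs K. 2 * L * s)"
  proof (intro add_mono sum_mono)
    fix j assume "j \<in> {1..<K}"
    then have "prob ({\<omega> \<in> space M. X j \<omega> \<le> s} \<union> {\<omega> \<in> space M. 1 - s < X j \<omega>})
        \<le> L * s + L * s"
      using \<open>0 \<le> s\<close> by (intro order_trans[OF measure_Un_le] add_mono prob_below_le prob_above_le) auto
    moreover have "{\<omega> \<in> space M. X j \<omega> \<le> s \<or> 1 - s < X j \<omega>}
        = {\<omega> \<in> space M. X j \<omega> \<le> s} \<union> {\<omega> \<in> space M. 1 - s < X j \<omega>}" by auto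
    ultimately show "prob {\<omega> \<in> space M. X j \<omega> \<le> s \<or> 1 - s < X j \<omega>} \<le> 2 * L * s" by simp
  next
    fix p assume "p \<in> index_pairs K"
    then show "prob (close_event p s) \<le> 2 * L * s"
      unfolding close_event_def index_pairs_def using \<open>0 \<le> s\<close> by (intro prob_close_le) auto
  qed
  also have "\<dots> = real (K - 1) * (2 * L * s) + real (card (index_pairs K)) * (2 * L * s)" by simp
  also have "\<dots> \<le> real K * (2 * L * s) + real K ^ 2 * (2 * L * s)"
    using card_index_pairs_le[of K] L_pos \<open>0 \<le> s\<close>
    by (intro add_mono mult_right_mono) (auto simp: power2_eq_square simp flip: of_nat_mult)
  also have "\<dots> \<le> (2 * real K ^ 2) * (2 * L * s)"
    using assms L_pos \<open>0 \<le> s\<close> mult_right_mono[of "real K" "real K ^ 2" "2 * L * s"]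
    by (simp add: power2_eq_square algebra_simps)
  also have "\<dots> = 4 * L / real K ^ 2"
    unfolding s_def using assms by (simp add: field_simps power_def)
  finally show ?thesis .
qed

lemma AE_eventually_separated:
  "AE \<omega> in M. \<forall>\<^sub>F K in sequentially. separated (1 / real K ^ 4) (map (\<lambda>j. X j \<omega>) [1..<K])"
proof -
  have "summable (\<lambda>K. prob (unseparated_event K))"
  proof (rule summable_comparison_test')
    show "summable (\<lambda>K. 4 * L * inverse (real K ^ 2))"
      by (intro summable_mult inverse_power_summable) simp
    show "norm (prob (unseparated_event K)) \<le> 4 * L * inverse (real K ^ 2)" if "1 \<le> K" for K
      using prob_unseparated_event_le[OF that] by (simp add: field_simps)
  qed
  then have "AE \<omega> in M. \<forall>\<^sub>F K in sequentially. \<omega> \<in> space M - unseparated_event K"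
    by (intro borel_cantelli_AE1) (auto simp: less_top[symmetric])
  then show ?thesis
    by (rule eventually_mono) (elim eventually_mono, metis DiffE separated_if_not_unseparated_event)
qed

definition many_close_pairs_event :: "real \<Rightarrow> nat \<Rightarrow> 'a set" where
  "many_close_pairs_event \<delta> m = {\<omega> \<in> space M.
     \<delta> * 2 ^ m \<le> real (card (close_pairs (index_pairs (2 ^ (m + 1))) (close_ratio \<delta> ^ (m + 1)) \<omega>))}"

lemma many_close_pairs_event_sets [measurable]: "many_close_pairs_event \<delta> m \<in> sets M"
proof -
  define P where "P = index_pairs (2 ^ (m + 1))"
  define t where "t = close_ratio \<delta> ^ (m + 1)"
  have [measurable]: "(\<lambda>\<omega>. \<Sum>p\<in>P. indicator (close_event p t) \<omega> :: real) \<in> borel_measurable M"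
    by (intro borel_measurable_sum borel_measurable_indicator close_event_sets) (auto simp: P_def index_pairs_def)
  have eq: "many_close_pairs_event \<delta> m = {\<omega> \<in> space M. \<delta> * 2 ^ m \<le> (\<Sum>p\<in>P. indicator (close_event p t) \<omega>)}"
    unfolding many_close_pairs_event_def P_def t_def by (auto simp: card_close_pairs_eq_sum_indicator)
  show ?thesis unfolding eq by measurable
qed

lemma prob_many_close_pairs_event_le:
  assumes "0 < \<delta>"
  shows "prob (many_close_pairs_event \<delta> m) \<le> 4 * L / \<delta> * (2 * close_ratio \<delta>) ^ (m + 1)"
proof -
  have "prob (many_close_pairs_event \<delta> m)
      \<le> real (card (index_pairs (2 ^ (m + 1)))) * (2 * L * close_ratio \<delta> ^ (m + 1)) / (\<delta> * 2 ^ m)"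
    unfolding many_close_pairs_event_def using assms less_imp_le[OF close_ratio_pos[of \<delta>]]
    by (intro prob_card_close_pairs_ge_le) (auto simp: index_pairs_def)
  also have "\<dots> \<le> real (2 ^ (m + 1) * 2 ^ (m + 1)) * (2 * L * close_ratio \<delta> ^ (m + 1)) / (\<delta> * 2 ^ m)"
  proof (intro divide_right_mono mult_right_mono)
    show "real (card (index_pairs (2 ^ (m + 1)))) \<le> real (2 ^ (m + 1) * 2 ^ (m + 1))"
      using card_index_pairs_le by (simp only: of_nat_le_iff)
    show "0 \<le> 2 * L * close_ratio \<delta> ^ (m + 1)" using L_pos close_ratio_pos[of \<delta>] by simp
  qed (use assms in simp)
  also have "\<dots> = 4 * L / \<delta> * (2 * close_ratio \<delta>) ^ (m + 1)"
    using assms by (simp add: field_simps power_mult_distrib)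
  finally show ?thesis .
qed

lemma AE_eventually_few_close_pairs:
  assumes "0 < \<delta>"
  shows "AE \<omega> in M. \<forall>\<^sub>F m in sequentially.
    real (card (close_pairs (index_pairs (2 ^ (m + 1))) (close_ratio \<delta> ^ (m + 1)) \<omega>)) < \<delta> * 2 ^ m"
proof -
  have "summable (\<lambda>m. 4 * L / \<delta> * (2 * close_ratio \<delta>) ^ (m + 1))"
    using two_close_ratio_less_1[OF assms] close_ratio_pos[of \<delta>]
    by (intro summable_mult summable_ignore_initial_segment[where k = 1] summable_geometric) auto
  then have "summable (\<lambda>m. prob (many_close_pairs_event \<delta> m))"
    by (rule summable_comparison_test'[where N = 0])
      (metis measure_nonneg real_norm_def abs_of_nonneg prob_many_close_pairs_event_le[OF assms])
  then have "AE \<omega> in M. \<forall>\<^sub>F m in sequentially. \<omega> \<in> space M - many_close_pairs_event \<delta> m"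
    by (intro borel_cantelli_AE1) (auto simp: less_top[symmetric])
  then show ?thesis
    by (rule eventually_mono) (auto elim!: eventually_mono simp: many_close_pairs_event_def)
qed

lemma card_close_index_pairs_sample_le:
  assumes "K \<le> n"
  shows "card (close_index_pairs (map (\<lambda>j. X j \<omega>) [1..<K]) t) \<le> card (close_pairs (index_pairs n) t \<omega>)"
proof (rule card_inj_on_le)
  show "inj_on (\<lambda>(j, l). (j + 1, l + 1)) (close_index_pairs (map (\<lambda>j. X j \<omega>) [1..<K]) t)"
    by (auto simp: inj_on_def)
  show "(\<lambda>(j, l). (j + 1, l + 1)) ` close_index_pairs (map (\<lambda>j. X j \<omega>) [1..<K]) t
      \<subseteq> close_pairs (index_pairs n) t \<omega>"
    using assms by (auto simp: close_index_pairs_def close_pairs_def index_pairs_def nth_map_upt add.commute)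
  show "finite (close_pairs (index_pairs n) t \<omega>)" unfolding close_pairs_def by simp
qed

lemma log_spacing_mean_sample_ge:
  assumes "2 \<le> K" "2 ^ m \<le> K" "K < 2 ^ (m + 1)" "0 < \<delta>"
    and "separated (1 / real K ^ 4) (map (\<lambda>j. X j \<omega>) [1..<K])"
    and "real (card (close_pairs (index_pairs (2 ^ (m + 1))) (close_ratio \<delta> ^ (m + 1)) \<omega>)) < \<delta> * 2 ^ m"
  shows "-1 - 5 * \<delta> - (1 + \<delta>) * ln 2 / ln (real K) - 8 / real K
           \<le> log_spacing_mean (map (\<lambda>j. X j \<omega>) [1..<K])"
proof -
  define t where "t = close_ratio \<delta> ^ (m + 1)"
  have block: "(2 :: real) ^ m \<le> real K" using assms(2) by (metis of_nat_le_iff of_nat_numeral of_nat_power)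
  have len: "length (map (\<lambda>j. X j \<omega>) [1..<K]) + 1 = K" using assms(1) by simp
  have "0 < close_ratio \<delta>" "close_ratio \<delta> \<le> 1"
    using close_ratio_pos[of \<delta>] two_close_ratio_less_1[OF assms(4)] by auto
  then have "0 < t" "t \<le> 1" unfolding t_def using power_le_one[of "close_ratio \<delta>" "m + 1"] by auto
  moreover have "- (1 + \<delta>) * ln (2 * real K) \<le> ln t"
    unfolding t_def using block assms(4) by (intro ln_close_ratio_power_ge) auto
  moreover have "real (card (close_index_pairs (map (\<lambda>j. X j \<omega>) [1..<K]) t)) \<le> \<delta> * real K"
  proof -
    have "real (card (close_index_pairs (map (\<lambda>j. X j \<omega>) [1..<K]) t))
        \<le> real (card (close_pairs (index_pairs (2 ^ (m + 1))) t \<omega>))"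
      using card_close_index_pairs_sample_le[of K "2 ^ (m + 1)"] assms(3) by simp
    also have "\<dots> \<le> \<delta> * 2 ^ m" using assms(6) unfolding t_def by simp
    also have "\<dots> \<le> \<delta> * real K"
      using block assms(4) by (intro mult_left_mono) auto
    finally show ?thesis .
  qed
  ultimately show ?thesis
    using log_spacing_mean_ge[of "map (\<lambda>j. X j \<omega>) [1..<K]" t \<delta>] assms(1,5) len by auto
qed

theorem log_spacing_mean_sample_tendsto:
  "AE \<omega> in M. (\<lambda>K. log_spacing_mean (map (\<lambda>j. X j \<omega>) [1..<K])) \<longlonglongrightarrow> -1"
proof -
  define \<delta> where "\<delta> k = 1 / (6 * (real k + 1))" for k :: nat
  have \<delta>_pos: "0 < \<delta> k" for k unfolding \<delta>_def by simp
  have "AE \<omega> in M. \<forall>k. \<forall>\<^sub>F m in sequentially.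
      real (card (close_pairs (index_pairs (2 ^ (m + 1))) (close_ratio (\<delta> k) ^ (m + 1)) \<omega>)) < \<delta> k * 2 ^ m"
    by (subst AE_all_countable) (intro allI AE_eventually_few_close_pairs \<delta>_pos)
  with AE_eventually_separated show ?thesis
  proof eventually_elim
    case (elim \<omega>)
    note sep = elim(1) and few = elim(2)
    show ?case
    proof (rule tendsto_of_eventually_bounds)
      show "\<forall>\<^sub>F K in sequentially. log_spacing_mean (map (\<lambda>j. X j \<omega>) [1..<K]) \<le> -1"
        using sep eventually_ge_at_top[of 2]
      proof eventually_elim
        case (elim K)
        then show ?case by (intro separated_log_spacing_mean_le[of "1 / real K ^ 4"]) auto
      qed
    next
      fix k
      have "((\<lambda>K. (1 + \<delta> k) * ln 2 / ln (real K) + 8 / real K) \<longlongrightarrow> 0) sequentially"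
        by real_asymp
      then have "\<forall>\<^sub>F K in sequentially. (1 + \<delta> k) * ln 2 / ln (real K) + 8 / real K < \<delta> k"
        using \<delta>_pos by (rule order_tendstoD)
      then show "\<forall>\<^sub>F K in sequentially. -1 - 1 / (real k + 1) \<le> log_spacing_mean (map (\<lambda>j. X j \<omega>) [1..<K])"
        using sep eventually_dyadic_block[OF few[rule_format, of k]] eventually_ge_at_top[of 2]
      proof eventually_elim
        case (elim K)
        then obtain m where "2 ^ m \<le> K" "K < 2 ^ (m + 1)"
          "real (card (close_pairs (index_pairs (2 ^ (m + 1))) (close_ratio (\<delta> k) ^ (m + 1)) \<omega>)) < \<delta> k * 2 ^ m"
          by blast
        then have "-1 - 5 * \<delta> k - (1 + \<delta> k) * ln 2 / ln (real K) - 8 / real K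
            \<le> log_spacing_mean (map (\<lambda>j. X j \<omega>) [1..<K])"
          using elim \<delta>_pos by (intro log_spacing_mean_sample_ge) auto
        moreover have "6 * \<delta> k = 1 / (real k + 1)" unfolding \<delta>_def by (simp add: field_simps)
        ultimately show ?case using elim(1) by linarith
      qed
    qed
  qed
qed

end

theorem corollary1:
  fixes M :: "'a measure" and H :: "real \<Rightarrow> real" and X :: "nat \<Rightarrow> 'a \<Rightarrow> real"
  assumes "prob_space M"
    and H_mono: "mono H"
    and H_rcont: "\<And>x. continuous (at_right x) H"
    and H_neg: "\<And>x. x < 0 \<Longrightarrow> H x = 0"
    and H_one: "\<And>x. x \<ge> 1 \<Longrightarrow> H x = 1"
    and deriv_bound: "\<exists>\<epsilon>0>0. AE x in lborel. x \<in> {0..1} \<longrightarrow>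
        (\<exists>f. (gen_inv H has_real_derivative f) (at x) \<and> f \<ge> \<epsilon>0)"
    and indep: "prob_space.indep_vars M (\<lambda>_. borel) X {1..}"
    and distr: "\<And>i x. i \<ge> 1 \<Longrightarrow> measure M {\<omega> \<in> space M. X i \<omega> \<le> x} = H x"
  shows "AE \<omega> in M. (\<lambda>K. (1 / real K) *
            (\<Sum>i = 1..K. log (real K) (spacing (map (\<lambda>j. X j \<omega>) [1..<K]) i)))
          \<longlonglongrightarrow> -1"
proof -
  interpret prob_space M by fact
  obtain e where "0 < e" and deriv: "AE x in lborel. x \<in> {0..1} \<longrightarrow>
      (\<exists>f. (gen_inv H has_real_derivative f) (at x) \<and> f \<ge> e)"
    using deriv_bound by blast
  have lipschitz: "H b - H a \<le> 1 / e * (b - a)" if "a \<le> b" for a b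
    using cdf_lipschitz_if_gen_inv_deriv_ge[OF H_mono H_neg H_one _ deriv that] \<open>0 < e\<close>
    by (simp add: field_simps)
  have "H 0 \<le> 0"
  proof (rule field_le_epsilon)
    fix s :: real assume "0 < s"
    then show "H 0 \<le> 0 + s"
      using lipschitz[of "- (e * s)" 0] H_neg[of "- (e * s)"] \<open>0 < e\<close> by simp
  qed
  moreover have "H (-1) \<le> H 0" using H_mono by (simp add: monoD)
  ultimately interpret lipschitz_cdf_sample M X H "1 / e"
    using indep distr lipschitz H_neg[of "-1"] H_one[of 1] by unfold_locales auto
  have eq: "\<forall>\<^sub>F K in sequentially. log_spacing_mean (map (\<lambda>j. X j \<omega>) [1..<K])
      = (1 / real K) * (\<Sum>i = 1..K. log (real K) (spacing (map (\<lambda>j. X j \<omega>) [1..<K]) i))" for \<omega>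
    using eventually_ge_at_top[of 1] by eventually_elim (simp add: log_spacing_mean_def)
  show ?thesis
    using log_spacing_mean_sample_tendsto by (rule eventually_mono) (use tendsto_cong[OF eq] in blast)
qed

end
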